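(* Let $\mathfrak h\subseteq\Phi^+$ be a Hessenberg set, let $w,v\in W$ with $v$ a cover of $w$, $v=s_\alpha w$, and suppose $\alpha\in\Delta$ is a simple root. If $\alpha\in N^{\mathfrak h}_v$, then $N^{\mathfrak h}_v=\{\alpha\}\cup s_\alpha N^{\mathfrak h}_w$; if $\alpha\notin N^{\mathfrak h}_v$, then $N^{\mathfrak h}_v=s_\alpha N^{\mathfrak h}_w$.
   Context: $\Phi$ is a crystallographic root system in a real Euclidean space with base $\Delta$, positive roots $\Phi^+$, $\Phi^-=-\Phi^+$, Weyl group $W$ with length $\ell$, and $s_\alpha$ the reflection through $\alpha$. Write $\alpha\prec\beta$ if $\beta-\alpha$ is a sum of positive roots. A Hessenberg set is a subset $\mathfrak h\subseteq\Phi^+$ whose complement in $\Phi^+$ is upward closed for $\prec$. For $w\in W$, $N^{\mathfrak h}_w=\{\beta\in\Phi^+: w^{-1}\beta\in-\mathfrak h\}$. We say $v$ is a cover of $w$ if $v=s_\alpha w$ for some $\alpha\in\Phi^+$ with $v^{-1}\alpha\in\Phi^-$ and $\ell(v)=\ell(w)+1$. *)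

theory Defs
  imports "HOL-Analysis.Analysis"
begin

definition sref :: "'a::euclidean_space \<Rightarrow> 'a \<Rightarrow> 'a" where
  "sref a x = x - ((2 * (x \<bullet> a)) / (a \<bullet> a)) *\<^sub>R a"

definition root_system :: "'a::euclidean_space set \<Rightarrow> bool" where
  "root_system R \<longleftrightarrow>
     finite R \<and> 0 \<notin> R \<and> span R = UNIV \<and>
     (\<forall>a\<in>R. {c *\<^sub>R a | c. c *\<^sub>R a \<in> R} = {a, - a}) \<and>
     (\<forall>a\<in>R. sref a ` R = R) \<and>
     (\<forall>a\<in>R. \<forall>b\<in>R. (2 * (b \<bullet> a)) / (a \<bullet> a) \<in> \<int>)"

definition is_base :: "'a::euclidean_space set \<Rightarrow> 'a set \<Rightarrow> bool" where
  "is_base R D \<longleftrightarrow> D \<subseteq> R \<and> independent D \<and>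
     (\<forall>b\<in>R. \<exists>c :: 'a \<Rightarrow> int. b = (\<Sum>d\<in>D. of_int (c d) *\<^sub>R d) \<and>
              ((\<forall>d\<in>D. c d \<ge> 0) \<or> (\<forall>d\<in>D. c d \<le> 0)))"

definition pos_roots :: "'a::euclidean_space set \<Rightarrow> 'a set \<Rightarrow> 'a set" where
  "pos_roots R D = {b\<in>R. \<exists>c :: 'a \<Rightarrow> int. b = (\<Sum>d\<in>D. of_int (c d) *\<^sub>R d) \<and> (\<forall>d\<in>D. c d \<ge> 0)}"

definition neg_roots :: "'a::euclidean_space set \<Rightarrow> 'a set \<Rightarrow> 'a set" where
  "neg_roots R D = uminus ` pos_roots R D"

inductive_set weyl :: "'a::euclidean_space set \<Rightarrow> ('a \<Rightarrow> 'a) set" for R where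
  weyl_id: "id \<in> weyl R"
| weyl_step: "a \<in> R \<Longrightarrow> w \<in> weyl R \<Longrightarrow> sref a \<circ> w \<in> weyl R"

definition wlen :: "'a::euclidean_space set \<Rightarrow> ('a \<Rightarrow> 'a) \<Rightarrow> nat" where
  "wlen D w = (LEAST n. \<exists>as. set as \<subseteq> D \<and> length as = n \<and> w = foldr (\<lambda>a f. sref a \<circ> f) as id)"

definition root_prec :: "'a::euclidean_space set \<Rightarrow> 'a set \<Rightarrow> 'a \<Rightarrow> 'a \<Rightarrow> bool" where
  "root_prec R D a b \<longleftrightarrow> (\<exists>xs. xs \<noteq> [] \<and> set xs \<subseteq> pos_roots R D \<and> b - a = sum_list xs)"

definition hessenberg :: "'a::euclidean_space set \<Rightarrow> 'a set \<Rightarrow> 'a set \<Rightarrow> bool" where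
  "hessenberg R D h \<longleftrightarrow> h \<subseteq> pos_roots R D \<and>
     (\<forall>b\<in>pos_roots R D - h. \<forall>c\<in>pos_roots R D. root_prec R D b c \<longrightarrow> c \<in> pos_roots R D - h)"

definition N_hess :: "'a::euclidean_space set \<Rightarrow> 'a set \<Rightarrow> 'a set \<Rightarrow> ('a \<Rightarrow> 'a) \<Rightarrow> 'a set" where
  "N_hess R D h w = {b\<in>pos_roots R D. inv w b \<in> uminus ` h}"

definition cover_via :: "'a::euclidean_space set \<Rightarrow> 'a set \<Rightarrow> 'a \<Rightarrow> ('a \<Rightarrow> 'a) \<Rightarrow> ('a \<Rightarrow> 'a) \<Rightarrow> bool" where
  "cover_via R D a w v \<longleftrightarrow> a \<in> pos_roots R D \<and> v = sref a \<circ> w \<and>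
     inv v a \<in> neg_roots R D \<and> wlen D v = wlen D w + 1"

end

theory Submission
  imports Defs
begin

text \<open>
  Write \<open>s = s\<^sub>\<alpha>\<close>, so \<open>v\<^sup>-\<^sup>1 = w\<^sup>-\<^sup>1 s\<close>. For a simple root \<open>\<alpha>\<close> the reflection \<open>s\<close>
  permutes \<open>\<Phi>\<^sup>+ - {\<alpha>}\<close>, so for \<open>\<beta> \<noteq> \<alpha>\<close> we get \<open>\<beta> \<in> N\<^sub>v \<longleftrightarrow> s \<beta> \<in> N\<^sub>w\<close>, i.e.
  \<open>N\<^sub>v - {\<alpha>} = s N\<^sub>w\<close>. Moreover \<open>\<alpha> \<notin> s N\<^sub>w\<close>: \<open>s \<alpha> = -\<alpha>\<close> is not positive. So the two
  cases differ only in whether \<open>\<alpha>\<close> itself belongs to \<open>N\<^sub>v\<close>.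
\<close>

lemma sref_sref [simp]: "sref a (sref a x) = x"
proof (cases "a = 0")
  case False
  then have "sref a x \<bullet> a = - (x \<bullet> a)"
    by (simp add: sref_def algebra_simps)
  with False show ?thesis by (simp add: sref_def algebra_simps)
qed (simp add: sref_def)

lemma sref_self [simp]: "sref a a = - a"
  by (cases "a = 0") (simp_all add: sref_def scaleR_2)

lemma sref_uminus: "sref a (- x) = - sref a x"
  by (simp add: sref_def algebra_simps)

lemma bij_sref: "bij (sref a)"
  by (metis bijI' sref_sref)

lemma sref_image_iff: "b \<in> sref a ` S \<longleftrightarrow> sref a b \<in> S"
  by (metis image_iff sref_sref)

lemma inv_sref [simp]: "inv (sref a) = sref a"
  by (rule inv_unique_comp) (simp_all add: fun_eq_iff)

lemma weyl_bij_odd: "w \<in> weyl R \<Longrightarrow> bij w \<and> (\<forall>x. w (- x) = - w x)"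
proof (induction rule: weyl.induct)
  case (weyl_step a w)
  then show ?case
    using bij_comp[OF _ bij_sref, of w a] by (simp add: comp_def sref_uminus)
qed (simp add: bij_def)

lemma inv_odd:
  assumes "bij f" and "\<And>x. f (- x) = - f x"
  shows "inv f (- y) = - inv f y"
  by (metis assms bij_inv_eq_iff)

lemma root_system_nonzero: "root_system R \<Longrightarrow> 0 \<notin> R"
  unfolding root_system_def by (elim conjE)

lemma root_system_reduced:
  "root_system R \<Longrightarrow> a \<in> R \<Longrightarrow> c *\<^sub>R a \<in> R \<Longrightarrow> c *\<^sub>R a = a \<or> c *\<^sub>R a = - a"
  unfolding root_system_def by (elim conjE) (drule bspec, assumption, blast)

lemma root_system_sref_closed: "root_system R \<Longrightarrow> a \<in> R \<Longrightarrow> b \<in> R \<Longrightarrow> sref a b \<in> R"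
  unfolding root_system_def by (elim conjE) (drule bspec, assumption, blast)

lemma root_system_Cartan_integer:
  "root_system R \<Longrightarrow> a \<in> R \<Longrightarrow> b \<in> R \<Longrightarrow> (2 * (b \<bullet> a)) / (a \<bullet> a) \<in> \<int>"
  unfolding root_system_def by (elim conjE) (drule bspec, assumption, blast)

lemma base_coeffs_unique:
  fixes D :: "'a::euclidean_space set"
  assumes "independent D" and "x \<in> D"
    and "(\<Sum>d\<in>D. of_int (f d) *\<^sub>R d) = (\<Sum>d\<in>D. of_int (g d) *\<^sub>R d)"
  shows "f x = g x"
proof -
  have "(\<Sum>d\<in>D. (of_int (f d) - of_int (g d)) *\<^sub>R d) = 0"
    using assms(3) by (simp add: scaleR_diff_left sum_subtractf)
  then have "(of_int (f x) - of_int (g x) :: real) = 0"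
    by (rule independentD[OF assms(1) finiteI_independent[OF assms(1)] subset_refl _ assms(2)])
  then show ?thesis by simp
qed

lemma sum_indicator_scaleR:
  fixes D :: "'a::real_vector set"
  assumes "finite D" and "a \<in> D"
  shows "(\<Sum>d\<in>D. of_int (if d = a then k else 0) *\<^sub>R d) = of_int k *\<^sub>R a"
proof -
  have "(\<Sum>d\<in>D. of_int (if d = a then k else 0) *\<^sub>R d) = (\<Sum>d\<in>D. if d = a then of_int k *\<^sub>R d else 0)"
    by (intro sum.cong) simp_all
  also have "\<dots> = of_int k *\<^sub>R a"
    using assms by simp
  finally show ?thesis .
qed

lemma base_subset: "is_base R D \<Longrightarrow> D \<subseteq> R"
  unfolding is_base_def by (elim conjE)

lemma base_independent: "is_base R D \<Longrightarrow> independent D"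
  unfolding is_base_def by (elim conjE)

lemma base_finite: "is_base R D \<Longrightarrow> finite D"
  by (rule finiteI_independent[OF base_independent])

lemma base_root_coeffs:
  "is_base R D \<Longrightarrow> b \<in> R \<Longrightarrow> \<exists>c :: 'a::euclidean_space \<Rightarrow> int. b = (\<Sum>d\<in>D. of_int (c d) *\<^sub>R d) \<and>
     ((\<forall>d\<in>D. c d \<ge> 0) \<or> (\<forall>d\<in>D. c d \<le> 0))"
  unfolding is_base_def by (elim conjE) (rule bspec)

lemma uminus_pos_root_not_pos:
  assumes "root_system R" and "is_base R D" and "b \<in> pos_roots R D"
  shows "- b \<notin> pos_roots R D"
proof
  assume "- b \<in> pos_roots R D"
  then obtain e where e: "- b = (\<Sum>d\<in>D. of_int (e d) *\<^sub>R d)" "\<forall>d\<in>D. e d \<ge> 0"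
    unfolding pos_roots_def by blast
  obtain c where c: "b = (\<Sum>d\<in>D. of_int (c d) *\<^sub>R d)" "\<forall>d\<in>D. c d \<ge> 0"
    using assms(3) unfolding pos_roots_def by blast
  have "b = - (\<Sum>d\<in>D. of_int (e d) *\<^sub>R d)"
    using e(1) by (metis minus_minus)
  then have "(\<Sum>d\<in>D. of_int (c d) *\<^sub>R d) = (\<Sum>d\<in>D. of_int (- e d) *\<^sub>R d)"
    using c(1) by (simp add: sum_negf)
  then have "\<forall>d\<in>D. c d = - e d"
    using base_coeffs_unique[OF base_independent[OF assms(2)], of _ c "\<lambda>d. - e d"] by blast
  with c(2) e(2) have "\<forall>d\<in>D. c d = 0"
    by force
  with c(1) have "b = 0"
    by simp
  moreover have "b \<in> R"
    using assms(3) unfolding pos_roots_def by blast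
  ultimately show False
    using root_system_nonzero[OF assms(1)] by simp
qed

lemma simple_root_pos:
  assumes "root_system R" and "is_base R D" and "a \<in> D"
  shows "a \<in> pos_roots R D"
proof -
  have "a = (\<Sum>d\<in>D. of_int (if d = a then 1 else 0) *\<^sub>R d)"
    using sum_indicator_scaleR[OF base_finite[OF assms(2)] assms(3), of 1] by simp
  moreover have "a \<in> R"
    using base_subset[OF assms(2)] assms(3) by blast
  ultimately show ?thesis
    unfolding pos_roots_def by (intro CollectI conjI exI[of _ "\<lambda>d. if d = a then 1 else 0"]) auto
qed

lemma pos_root_other_coeff:
  assumes "root_system R" and "is_base R D" and "a \<in> D"
    and "b \<in> pos_roots R D" and "b \<noteq> a"
    and "b = (\<Sum>d\<in>D. of_int (c d) *\<^sub>R d)" and "\<forall>d\<in>D. c d \<ge> 0"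
  obtains d where "d \<in> D" "d \<noteq> a" "c d > 0"
proof (rule ccontr)
  assume "\<not> thesis"
  with that assms(7) have "\<forall>d\<in>D. d \<noteq> a \<longrightarrow> c d = 0"
    by force
  then have "b = (\<Sum>d\<in>D. of_int (if d = a then c a else 0) *\<^sub>R d)"
    unfolding assms(6) by (intro sum.cong) auto
  also have "\<dots> = of_int (c a) *\<^sub>R a"
    using sum_indicator_scaleR[OF base_finite[OF assms(2)] assms(3)] .
  finally have "b = of_int (c a) *\<^sub>R a" .
  moreover have "a \<in> R"
    using base_subset[OF assms(2)] assms(3) by blast
  moreover have "b \<in> R"
    using assms(4) unfolding pos_roots_def by blast
  ultimately have "b = a \<or> b = - a"
    using root_system_reduced[OF assms(1), of a "of_int (c a)"] by simp
  with assms(5) have "b = - a"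
    by simp
  then show False
    using uminus_pos_root_not_pos[OF assms(1,2) simple_root_pos[OF assms(1-3)]] assms(4) by simp
qed

text \<open>
  \<open>s\<^sub>\<alpha> \<beta> = \<beta> - m \<alpha>\<close> changes only the \<open>\<alpha>\<close>-coefficient of \<open>\<beta>\<close>; some other coefficient
  stays positive, and a root has coefficients of one sign.
\<close>
lemma sref_simple_pos_root:
  assumes rs: "root_system R" and bs: "is_base R D" and aD: "a \<in> D"
    and bP: "b \<in> pos_roots R D" and ba: "b \<noteq> a"
  shows "sref a b \<in> pos_roots R D"
proof -
  have aR: "a \<in> R" and ind: "independent D"
    using base_subset[OF bs] aD base_independent[OF bs] by blast+
  have bR: "b \<in> R"
    using bP unfolding pos_roots_def by blast
  obtain c where c: "b = (\<Sum>d\<in>D. of_int (c d) *\<^sub>R d)" "\<forall>d\<in>D. c d \<ge> 0"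
    using bP unfolding pos_roots_def by blast
  obtain d0 where d0: "d0 \<in> D" "d0 \<noteq> a" "c d0 > 0"
    using pos_root_other_coeff[OF rs bs aD bP ba c] .
  obtain m where "(2 * (b \<bullet> a)) / (a \<bullet> a) = of_int m"
    using root_system_Cartan_integer[OF rs aR bR] by (rule Ints_cases)
  then have "sref a b = b - of_int m *\<^sub>R a"
    by (simp add: sref_def)
  also have "\<dots> = (\<Sum>d\<in>D. of_int (c d) *\<^sub>R d) - (\<Sum>d\<in>D. of_int (if d = a then m else 0) *\<^sub>R d)"
    unfolding c(1)[symmetric] sum_indicator_scaleR[OF base_finite[OF bs] aD] ..
  also have "\<dots> = (\<Sum>d\<in>D. of_int (c d - (if d = a then m else 0)) *\<^sub>R d)"
    by (simp only: of_int_diff scaleR_diff_left sum_subtractf)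
  finally have sb: "sref a b = \<dots>" .
  have sR: "sref a b \<in> R"
    using root_system_sref_closed[OF rs aR bR] .
  then obtain e where e: "sref a b = (\<Sum>d\<in>D. of_int (e d) *\<^sub>R d)"
      "(\<forall>d\<in>D. e d \<ge> 0) \<or> (\<forall>d\<in>D. e d \<le> 0)"
    using base_root_coeffs[OF bs sR] by blast
  have "e d0 = c d0 - (if d0 = a then m else 0)"
    using e(1) sb by (intro base_coeffs_unique[OF ind d0(1)]) simp
  with d0 have "e d0 > 0"
    by simp
  with e(2) d0(1) have "\<forall>d\<in>D. e d \<ge> 0"
    by force
  with e(1) sR show ?thesis
    unfolding pos_roots_def by blast
qed

lemma N_hess_sref_comp_iff:
  assumes rs: "root_system R" and bs: "is_base R D" and aD: "a \<in> D" and "bij w"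
    and bP: "b \<in> pos_roots R D" and ba: "b \<noteq> a"
  shows "b \<in> N_hess R D h (sref a \<circ> w) \<longleftrightarrow> sref a b \<in> N_hess R D h w"
proof -
  have "inv (sref a \<circ> w) b = inv w (sref a b)"
    by (simp add: o_inv_distrib[OF bij_sref \<open>bij w\<close>])
  with bP sref_simple_pos_root[OF rs bs aD bP ba] show ?thesis
    unfolding N_hess_def by simp
qed

lemma simple_root_notin_N_hess:
  assumes rs: "root_system R" and bs: "is_base R D" and hP: "h \<subseteq> pos_roots R D"
    and "w \<in> weyl R" and "cover_via R D a w v"
  shows "a \<notin> N_hess R D h w"
proof
  assume "a \<in> N_hess R D h w"
  then obtain x where x: "x \<in> h" "inv w a = - x"
    unfolding N_hess_def by blast
  obtain p where p: "p \<in> pos_roots R D" "inv v a = - p"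
    using assms(5) unfolding cover_via_def neg_roots_def by blast
  have "bij w" "\<And>y. w (- y) = - w y"
    using weyl_bij_odd[OF assms(4)] by auto
  then have "inv v a = x"
    using assms(5) x(2) inv_odd[of w]
    by (simp add: cover_via_def o_inv_distrib[OF bij_sref])
  with p x(1) hP have "- p \<in> pos_roots R D"
    by (metis minus_minus subsetD)
  with uminus_pos_root_not_pos[OF rs bs p(1)] show False ..
qed

lemma N_hess_cover_simple:
  assumes rs: "root_system R" and bs: "is_base R D" and hP: "h \<subseteq> pos_roots R D"
    and w: "w \<in> weyl R" and cov: "cover_via R D a w v" and aD: "a \<in> D"
  shows "N_hess R D h v - {a} = sref a ` N_hess R D h w"
proof (rule set_eqI)
  fix b
  have v: "v = sref a \<circ> w" and "bij w"
    using cov weyl_bij_odd[OF w] unfolding cover_via_def by auto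
  have aNw: "a \<notin> N_hess R D h w"
    using simple_root_notin_N_hess[OF rs bs hP w cov] .
  show "b \<in> N_hess R D h v - {a} \<longleftrightarrow> b \<in> sref a ` N_hess R D h w"
  proof (cases "b \<in> pos_roots R D \<and> b \<noteq> a")
    case True
    then show ?thesis
      using N_hess_sref_comp_iff[OF rs bs aD \<open>bij w\<close>] by (simp add: v sref_image_iff)
  next
    case False
    have "sref a b \<notin> N_hess R D h w"
    proof
      assume sb: "sref a b \<in> N_hess R D h w"
      with aNw have "sref a b \<in> pos_roots R D" "sref a b \<noteq> a"
        unfolding N_hess_def by auto
      then have "b \<in> pos_roots R D"
        using sref_simple_pos_root[OF rs bs aD] by fastforce
      moreover have "b \<noteq> a"
        using sb aNw simple_root_pos[OF rs bs aD] uminus_pos_root_not_pos[OF rs bs]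
        unfolding N_hess_def by force
      ultimately show False
        using False by blast
    qed
    moreover have "b \<notin> N_hess R D h v - {a}"
      using False unfolding N_hess_def by blast
    ultimately show ?thesis
      by (simp add: sref_image_iff)
  qed
qed

theorem corollary2p10:
  fixes R D h :: "'a::euclidean_space set" and w v :: "'a \<Rightarrow> 'a" and a :: 'a
  assumes "root_system R" and "is_base R D" and "hessenberg R D h"
    and "w \<in> weyl R" and "v \<in> weyl R"
    and "cover_via R D a w v" and "a \<in> D"
  shows "(a \<in> N_hess R D h v \<longrightarrow> N_hess R D h v = insert a (sref a ` N_hess R D h w)) \<and>
         (a \<notin> N_hess R D h v \<longrightarrow> N_hess R D h v = sref a ` N_hess R D h w)"
proof -
  have "h \<subseteq> pos_roots R D"
    using assms(3) unfolding hessenberg_def by blast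
  then have "N_hess R D h v - {a} = sref a ` N_hess R D h w"
    by (rule N_hess_cover_simple[OF assms(1,2) _ assms(4,6,7)])
  then show ?thesis
    by blast
qed

end
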